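(* Let $l,m\in\mathbb N$, $f:[l]\to[m]$ and $(H,\varrho)\in G_C[l]$. Then $f_{H*}(\mu_{(H,\varrho)})=\mu_{G_Cf(H,\varrho)}$, where on the left $f_{H*}:W(H)\to W(Gf(H))$ is the weight push-forward.
   Context: $\mathbb N=\{0,1,2,\dots\}$, $[l]=\{0,\dots,l-1\}$. $G[l]$ = sets of non-empty subsets of $[l]$ (hypergraphs), $Gf(H)=\{f(X)\mid X\in H\}$. $\mathsf A,\mathsf M$ finite additive commutative monoids; for finite $X\subset\mathbb N$, $\mathsf A^X$ = functions $X\to\mathsf A$; for $\phi:X\to Y$, $\phi_\star(w)(s)=\sum_{r:\phi(r)=s}w(r)$ and for $\varpi:\mathsf A^X\to\mathsf M$, $\phi_*(\varpi)(v)=\sum_{w\in\mathsf A^X:\phi_\star(w)=v}\varpi(w)$. A calibration $\varrho$ of $H$ assigns a function $\varrho_X:\mathsf A^X\to\mathsf M$ to each $X\in H$; $G_C[l]=\{(H,\varrho)\}$ and $G_Cf(H,\varrho)=(Gf(H),f_{H*}(\varrho))$ with $f_{H*}(\varrho)_Y=\sum_{X\in H,f(X)=Y}(f|_X)_*(\varrho_X)$. $W(H)=\mathsf M^H$ is the monoid of weight functions $H\to\mathsf M$, with weight push-forward $f_{H*}(\alpha)_Y=\sum_{X\in H,f(X)=Y}\alpha_X$ for $Y\in Gf(H)$. The weight function of $(H,\varrho)$ is $\mu_{(H,\varrho)}\in W(H)$, $\mu_{(H,\varrho)X}=\sum_{w\in\mathsf A^X}\varrho_X(w)$. *)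

theory Defs
  imports Main "HOL-Library.FuncSet"
begin

text \<open>Finite sets of natural numbers X; the monoid A^X is modelled by the extensional
  functions X to UNIV (PiE) (value undefined outside X).\<close>

definition segment :: "nat \<Rightarrow> nat set" where
  "segment l = {..<l}"

definition hypergraph :: "nat \<Rightarrow> nat set set \<Rightarrow> bool" where
  "hypergraph l H \<longleftrightarrow> (\<forall>X\<in>H. X \<noteq> {} \<and> X \<subseteq> segment l)"

definition Gmap :: "(nat \<Rightarrow> nat) \<Rightarrow> nat set set \<Rightarrow> nat set set" where
  "Gmap f H = (\<lambda>X. f ` X) ` H"

definition fun_push :: "(nat \<Rightarrow> nat) \<Rightarrow> nat set \<Rightarrow> nat set \<Rightarrow> (nat \<Rightarrow> 'a::comm_monoid_add) \<Rightarrow> (nat \<Rightarrow> 'a)" where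
  "fun_push \<phi> X Y w = (\<lambda>s\<in>Y. \<Sum>r\<in>{r\<in>X. \<phi> r = s}. w r)"

definition map_push :: "(nat \<Rightarrow> nat) \<Rightarrow> nat set \<Rightarrow> nat set
    \<Rightarrow> ((nat \<Rightarrow> 'a::{comm_monoid_add,finite}) \<Rightarrow> 'm::comm_monoid_add) \<Rightarrow> (nat \<Rightarrow> 'a) \<Rightarrow> 'm" where
  "map_push \<phi> X Y \<psi> v = (\<Sum>w\<in>{w \<in> X \<rightarrow>\<^sub>E UNIV. fun_push \<phi> X Y w = v}. \<psi> w)"

definition calib_push :: "(nat \<Rightarrow> nat) \<Rightarrow> nat set set
    \<Rightarrow> (nat set \<Rightarrow> (nat \<Rightarrow> 'a::{comm_monoid_add,finite}) \<Rightarrow> 'm::comm_monoid_add)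
    \<Rightarrow> (nat set \<Rightarrow> (nat \<Rightarrow> 'a) \<Rightarrow> 'm)" where
  "calib_push f H \<rho> Y v = (\<Sum>X\<in>{X\<in>H. f ` X = Y}. map_push f X Y (\<rho> X) v)"

definition GCmap :: "(nat \<Rightarrow> nat)
    \<Rightarrow> nat set set \<times> (nat set \<Rightarrow> (nat \<Rightarrow> 'a::{comm_monoid_add,finite}) \<Rightarrow> 'm::comm_monoid_add)
    \<Rightarrow> nat set set \<times> (nat set \<Rightarrow> (nat \<Rightarrow> 'a) \<Rightarrow> 'm)" where
  "GCmap f Hr = (Gmap f (fst Hr), calib_push f (fst Hr) (snd Hr))"

definition weight :: "nat set set \<times> (nat set \<Rightarrow> (nat \<Rightarrow> 'a::{comm_monoid_add,finite}) \<Rightarrow> 'm::comm_monoid_add)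
    \<Rightarrow> nat set \<Rightarrow> 'm" where
  "weight Hr = (\<lambda>X\<in>fst Hr. \<Sum>w\<in>X \<rightarrow>\<^sub>E UNIV. snd Hr X w)"

definition weight_push :: "(nat \<Rightarrow> nat) \<Rightarrow> nat set set \<Rightarrow> (nat set \<Rightarrow> 'm::comm_monoid_add) \<Rightarrow> nat set \<Rightarrow> 'm" where
  "weight_push f H \<alpha> = (\<lambda>Y\<in>Gmap f H. \<Sum>X\<in>{X\<in>H. f ` X = Y}. \<alpha> X)"

end

theory Submission
  imports Defs
begin

text \<open>Pushing a calibration forward only regroups the terms of the total mass: for each edge X,
  the functions w on X are partitioned by their push-forward v on f(X), so summing (f|_X)_*(rho_X)
  over all v gives the weight of X; summing over the edges with image Y then gives the weight
  push-forward at Y.\<close>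

lemma hypergraph_finite_edge: "hypergraph l H \<Longrightarrow> X \<in> H \<Longrightarrow> finite X"
  unfolding hypergraph_def segment_def by (meson finite_lessThan finite_subset)

lemma sum_map_push:
  fixes \<psi> :: "(nat \<Rightarrow> 'a::{comm_monoid_add,finite}) \<Rightarrow> 'm::comm_monoid_add"
  assumes "finite X" "finite Y"
  shows "(\<Sum>v\<in>Y \<rightarrow>\<^sub>E UNIV. map_push \<phi> X Y \<psi> v) = (\<Sum>w\<in>X \<rightarrow>\<^sub>E UNIV. \<psi> w)"
  unfolding map_push_def
proof (rule sum.group)
  show "finite (X \<rightarrow>\<^sub>E (UNIV::'a set))" "finite (Y \<rightarrow>\<^sub>E (UNIV::'a set))"
    using assms by (simp_all add: finite_PiE)
  show "fun_push \<phi> X Y ` (X \<rightarrow>\<^sub>E UNIV) \<subseteq> Y \<rightarrow>\<^sub>E UNIV"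
    by (auto simp: fun_push_def)
qed

lemma sum_calib_push:
  fixes \<rho> :: "nat set \<Rightarrow> (nat \<Rightarrow> 'a::{comm_monoid_add,finite}) \<Rightarrow> 'm::comm_monoid_add"
  assumes "\<And>X. X \<in> H \<Longrightarrow> finite X" "finite Y"
  shows "(\<Sum>v\<in>Y \<rightarrow>\<^sub>E UNIV. calib_push f H \<rho> Y v)
       = (\<Sum>X\<in>{X\<in>H. f ` X = Y}. \<Sum>w\<in>X \<rightarrow>\<^sub>E UNIV. \<rho> X w)"
proof -
  have "(\<Sum>v\<in>Y \<rightarrow>\<^sub>E UNIV. calib_push f H \<rho> Y v)
      = (\<Sum>X\<in>{X\<in>H. f ` X = Y}. \<Sum>v\<in>Y \<rightarrow>\<^sub>E UNIV. map_push f X Y (\<rho> X) v)"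
    unfolding calib_push_def by (rule sum.swap)
  also have "\<dots> = (\<Sum>X\<in>{X\<in>H. f ` X = Y}. \<Sum>w\<in>X \<rightarrow>\<^sub>E UNIV. \<rho> X w)"
    using assms by (intro sum.cong sum_map_push) auto
  finally show ?thesis .
qed

lemma weight_GCmap:
  fixes \<rho> :: "nat set \<Rightarrow> (nat \<Rightarrow> 'a::{comm_monoid_add,finite}) \<Rightarrow> 'm::comm_monoid_add"
  assumes "\<And>X. X \<in> H \<Longrightarrow> finite X"
  shows "weight (GCmap f (H, \<rho>))
       = (\<lambda>Y\<in>Gmap f H. \<Sum>X\<in>{X\<in>H. f ` X = Y}. \<Sum>w\<in>X \<rightarrow>\<^sub>E UNIV. \<rho> X w)"
  unfolding weight_def GCmap_def fst_conv snd_conv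
proof (rule restrict_ext)
  fix Y assume "Y \<in> Gmap f H"
  then have "finite Y" using assms unfolding Gmap_def by blast
  then show "(\<Sum>v\<in>Y \<rightarrow>\<^sub>E UNIV. calib_push f H \<rho> Y v)
      = (\<Sum>X\<in>{X\<in>H. f ` X = Y}. \<Sum>w\<in>X \<rightarrow>\<^sub>E UNIV. \<rho> X w)"
    using assms by (rule sum_calib_push[rotated])
qed

theorem proposition3p41:
  fixes l m :: nat
    and f :: "nat \<Rightarrow> nat"
    and H :: "nat set set"
    and \<rho> :: "nat set \<Rightarrow> (nat \<Rightarrow> 'a::{comm_monoid_add,finite}) \<Rightarrow> 'm::{comm_monoid_add,finite}"
  assumes "f ` segment l \<subseteq> segment m"
    and "hypergraph l H"
  shows "weight_push f H (weight (H, \<rho>)) = weight (GCmap f (H, \<rho>))"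
proof -
  have "weight_push f H (weight (H, \<rho>))
      = (\<lambda>Y\<in>Gmap f H. \<Sum>X\<in>{X\<in>H. f ` X = Y}. \<Sum>w\<in>X \<rightarrow>\<^sub>E UNIV. \<rho> X w)"
    unfolding weight_push_def weight_def by (intro restrict_ext sum.cong) auto
  also have "\<dots> = weight (GCmap f (H, \<rho>))"
    using weight_GCmap[OF hypergraph_finite_edge[OF assms(2)]] by (rule sym)
  finally show ?thesis .
qed

end
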